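(* Let $f$ and $\varepsilon_0$ be as in the context and let $0<\alpha<\beta$. Let $(\mu_n)$ be a sequence of $\mathcal F$-invariant probability measures on $\Omega_{\varepsilon_0}\times M$ converging in the weak* topology to $\mu$, and suppose that for $\mu$-a.e. $(\underline\omega,x)$ $$\lim_{n\to+\infty}\frac1n\log\|Df^{-n}_{\underline\omega}|_{E^{cu}(\underline\omega,x)}\|<-\beta,\qquad \lim_{n\to+\infty}\frac1n\log\|Df^{n}_{\underline\omega}|_{E^{cs}(\underline\omega,x)}\|<-\beta .$$ Then for every $\eta\in(0,1)$ there is $\ell(\eta)\in\mathbb N$ such that for all $\ell\ge\ell(\eta)$, $$\liminf_{n\to+\infty}\mu_n(K_\ell(\beta))>1-\eta .$$
   Context: $M$ compact Riemannian manifold, $f$ a $C^2$ diffeomorphism with dominated splitting $TM=E^{cu}\oplus_{\succ}E^{cs}$, with a regular random perturbation (continuous $\omega\mapsto f_\omega\in\mathrm{Diff}^2(M)$ on a metric space $\mathcal T$, $f_{\omega_f}=f$, probabilities $\theta_\varepsilon$ on $\mathcal T$ with nested compact supports shrinking to $\{\omega_f\}$ and absolutely continuous transition probabilities). $\Omega_\varepsilon=\mathrm{supp}(\theta_\varepsilon^{\mathbb Z})$; $\mathcal F(\underline\omega,x)=(\sigma\underline\omega,f_{\omega_0}(x))$, $\sigma$ the left shift; $f^n_{\underline\omega}=f_{\omega_{n-1}}\circ\cdots\circ f_{\omega_0}$ ($n>0$), $f^{n}_{\underline\omega}=f_{\omega_n}^{-1}\circ\cdots\circ f_{\omega_{-1}}^{-1}$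 ($n<0$), derivatives taken at $x$. There is $\varepsilon_0>0$ and a continuous $\mathcal F$-invariant splitting $T_xM=E^{cu}(\underline\omega,x)\oplus E^{cs}(\underline\omega,x)$ on $\Omega_{\varepsilon_0}\times M$. For $\ell\in\mathbb N$ and $\beta>0$, $K_\ell(\beta)$ is the (closed) set of $(\underline\omega,x)\in\Omega_{\varepsilon_0}\times M$ with $\|Df^{\ell}_{\underline\omega}|_{E^{cs}(\underline\omega,x)}\|\le e^{-\beta\ell}$ and $\|Df^{-\ell}_{\underline\omega}|_{E^{cu}(\underline\omega,x)}\|\le e^{-\beta\ell}$. *)

theory Defs
  imports "HOL-Analysis.Analysis" "HOL-Probability.Probability"
begin

definition rnorm :: "('a::real_normed_vector \<Rightarrow> 'b::real_normed_vector) \<Rightarrow> 'a set \<Rightarrow> real" where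
  "rnorm L E = (if E \<subseteq> {0} then 0 else Sup ((\<lambda>v. norm (L v)) ` {v \<in> E. norm v = 1}))"

definition direct_sum :: "'a::real_vector set \<Rightarrow> 'a set \<Rightarrow> 'a set \<Rightarrow> bool" where
  "direct_sum T E F \<longleftrightarrow> subspace E \<and> subspace F \<and> E \<inter> F = {0} \<and>
     {u + v | u v. u \<in> E \<and> v \<in> F} = T"

text \<open>Orthogonal projection onto a subspace (used to express continuity of subspace fields).\<close>
definition oproj :: "'a::euclidean_space set \<Rightarrow> 'a \<Rightarrow> 'a" where
  "oproj E v = (THE w. w \<in> E \<and> (\<forall>u\<in>E. (v - w) \<bullet> u = 0))"

definition C2_on :: "'d::euclidean_space set \<Rightarrow> ('d \<Rightarrow> 'a::euclidean_space) \<Rightarrow> bool" where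
  "C2_on U g \<longleftrightarrow> (\<exists>(Dg :: 'd \<Rightarrow> ('d \<Rightarrow>\<^sub>L 'a)) (D2g :: 'd \<Rightarrow> ('d \<Rightarrow>\<^sub>L ('d \<Rightarrow>\<^sub>L 'a))).
     (\<forall>u\<in>U. (g has_derivative blinfun_apply (Dg u)) (at u)) \<and>
     (\<forall>u\<in>U. (Dg has_derivative blinfun_apply (D2g u)) (at u)) \<and>
     continuous_on U D2g)"

definition C2_chart :: "'a::euclidean_space set \<Rightarrow> 'd::euclidean_space set \<Rightarrow> ('d \<Rightarrow> 'a) \<Rightarrow> bool" where
  "C2_chart M U \<phi> \<longleftrightarrow> open U \<and> C2_on U \<phi> \<and> inj_on \<phi> U \<and>
     (\<exists>V. open V \<and> \<phi> ` U = M \<inter> V) \<and>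
     continuous_on (\<phi> ` U) (inv_into U \<phi>) \<and>
     (\<forall>u\<in>U. inj (frechet_derivative \<phi> (at u)))"

text \<open>M is an embedded C^2 submanifold of dimension DIM('d).\<close>
definition C2_submanifold :: "'a::euclidean_space set \<Rightarrow> 'd::euclidean_space itself \<Rightarrow> bool" where
  "C2_submanifold M TYPE('d) \<longleftrightarrow>
     (\<forall>x\<in>M. \<exists>(U::'d set) \<phi>. C2_chart M U \<phi> \<and> x \<in> \<phi> ` U)"

definition tspace :: "'a::euclidean_space set \<Rightarrow> 'a \<Rightarrow> 'a set" where
  "tspace M x = {v. \<exists>\<gamma>. (\<forall>t. \<gamma> t \<in> M) \<and> \<gamma> 0 = x \<and> (\<gamma> has_vector_derivative v) (at 0)}"

text \<open>Null sets of the Riemannian volume of M (read in the charts).\<close>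
definition M_null :: "'a::euclidean_space set \<Rightarrow> 'd::euclidean_space itself \<Rightarrow> 'a set \<Rightarrow> bool" where
  "M_null M TYPE('d) A \<longleftrightarrow> (\<forall>(U::'d set) \<phi>. C2_chart M U \<phi> \<longrightarrow> negligible (U \<inter> \<phi> -` A))"

text \<open>fam \<omega> = f_\<omega> and finv \<omega> = f_\<omega>^{-1}, given as C^2 maps on a neighbourhood of M.\<close>
primrec fpos :: "('w \<Rightarrow> 'a \<Rightarrow> 'a) \<Rightarrow> (int \<Rightarrow> 'w) \<Rightarrow> nat \<Rightarrow> 'a \<Rightarrow> 'a" where
  "fpos fam \<omega> 0 = id"
| "fpos fam \<omega> (Suc n) = fam (\<omega> (int n)) \<circ> fpos fam \<omega> n"

primrec fneg :: "('w \<Rightarrow> 'a \<Rightarrow> 'a) \<Rightarrow> (int \<Rightarrow> 'w) \<Rightarrow> nat \<Rightarrow> 'a \<Rightarrow> 'a" where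
  "fneg finv \<omega> 0 = id"
| "fneg finv \<omega> (Suc n) = finv (\<omega> (- int n - 1)) \<circ> fneg finv \<omega> n"

definition fiter :: "('w \<Rightarrow> 'a \<Rightarrow> 'a) \<Rightarrow> ('w \<Rightarrow> 'a \<Rightarrow> 'a) \<Rightarrow> (int \<Rightarrow> 'w) \<Rightarrow> int \<Rightarrow> 'a \<Rightarrow> 'a" where
  "fiter fam finv \<omega> n = (if n \<ge> 0 then fpos fam \<omega> (nat n) else fneg finv \<omega> (nat (- n)))"

definition Dfiter :: "('w \<Rightarrow> 'a::euclidean_space \<Rightarrow> 'a) \<Rightarrow> ('w \<Rightarrow> 'a \<Rightarrow> 'a) \<Rightarrow> (int \<Rightarrow> 'w) \<Rightarrow> int \<Rightarrow> 'a \<Rightarrow> 'a \<Rightarrow> 'a" where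
  "Dfiter fam finv \<omega> n x = frechet_derivative (fiter fam finv \<omega> n) (at x)"

definition shift :: "(int \<Rightarrow> 'w) \<Rightarrow> (int \<Rightarrow> 'w)" where
  "shift \<omega> = (\<lambda>k. \<omega> (k + 1))"

definition skewF :: "('w \<Rightarrow> 'a \<Rightarrow> 'a) \<Rightarrow> (int \<Rightarrow> 'w) \<times> 'a \<Rightarrow> (int \<Rightarrow> 'w) \<times> 'a" where
  "skewF fam p = (shift (fst p), fam (fst p 0) (snd p))"

text \<open>Topological support of a measure (inner-measure form, so that it also makes sense
  when open sets need not be measurable; agrees with the usual support on Borel measures).\<close>
definition msupp :: "'b::topological_space measure \<Rightarrow> 'b set" where
  "msupp N = {x. \<forall>U. open U \<and> x \<in> U \<longrightarrow> (\<exists>B\<in>sets N. B \<subseteq> U \<and> emeasure N B > 0)}"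

definition Omega :: "(real \<Rightarrow> 'w::topological_space measure) \<Rightarrow> real \<Rightarrow> (int \<Rightarrow> 'w) set" where
  "Omega \<theta> \<epsilon> = msupp (PiM (UNIV :: int set) (\<lambda>_. \<theta> \<epsilon>))"

definition weak_star_conv :: "'b::topological_space set \<Rightarrow> (nat \<Rightarrow> 'b measure) \<Rightarrow> 'b measure \<Rightarrow> bool" where
  "weak_star_conv S \<mu>s \<mu> \<longleftrightarrow>
     (\<forall>g :: 'b \<Rightarrow> real. continuous_on S g \<longrightarrow>
        (\<lambda>n. (LINT p:S|\<mu>s n. g p)) \<longlonglongrightarrow> (LINT p:S|\<mu>. g p))"

definition prob_on :: "'b::topological_space set \<Rightarrow> 'b measure \<Rightarrow> bool" where
  "prob_on S N \<longleftrightarrow> prob_space N \<and> sets N = sets borel \<and> emeasure N S = 1"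

definition invariant_on :: "'b::topological_space set \<Rightarrow> ('b \<Rightarrow> 'b) \<Rightarrow> 'b measure \<Rightarrow> bool" where
  "invariant_on S T N \<longleftrightarrow> (\<forall>A\<in>sets borel. emeasure N (T -` A \<inter> S) = emeasure N A)"

text \<open>The family \<omega> \<mapsto> f_\<omega> (with inverses) is continuous into Diff^2(M): there are C^2
  extensions to a neighbourhood of M whose derivatives up to order 2 depend jointly
  continuously on (\<omega>, x).\<close>
definition C2_family :: "'a::euclidean_space set \<Rightarrow> ('w::topological_space \<Rightarrow> 'a \<Rightarrow> 'a) \<Rightarrow> bool" where
  "C2_family U g \<longleftrightarrow> (\<exists>(Dg :: 'w \<Rightarrow> 'a \<Rightarrow> ('a \<Rightarrow>\<^sub>L 'a)) (D2g :: 'w \<Rightarrow> 'a \<Rightarrow> ('a \<Rightarrow>\<^sub>L ('a \<Rightarrow>\<^sub>L 'a))).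
     (\<forall>\<omega>. \<forall>x\<in>U. (g \<omega> has_derivative blinfun_apply (Dg \<omega> x)) (at x)) \<and>
     (\<forall>\<omega>. \<forall>x\<in>U. (Dg \<omega> has_derivative blinfun_apply (D2g \<omega> x)) (at x)) \<and>
     continuous_on (UNIV \<times> U) (\<lambda>(\<omega>, x). g \<omega> x) \<and>
     continuous_on (UNIV \<times> U) (\<lambda>(\<omega>, x). Dg \<omega> x) \<and>
     continuous_on (UNIV \<times> U) (\<lambda>(\<omega>, x). D2g \<omega> x))"

definition diff2_family :: "'a::euclidean_space set \<Rightarrow> ('w::topological_space \<Rightarrow> 'a \<Rightarrow> 'a) \<Rightarrow> ('w \<Rightarrow> 'a \<Rightarrow> 'a) \<Rightarrow> bool" where
  "diff2_family M fam finv \<longleftrightarrow>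
     (\<exists>U. open U \<and> M \<subseteq> U \<and> C2_family U fam \<and> C2_family U finv) \<and>
     (\<forall>\<omega>. \<forall>x\<in>M. fam \<omega> x \<in> M \<and> finv \<omega> x \<in> M \<and> finv \<omega> (fam \<omega> x) = x \<and> fam \<omega> (finv \<omega> x) = x)"

definition dominated_splitting :: "'a::euclidean_space set \<Rightarrow> ('w \<Rightarrow> 'a \<Rightarrow> 'a) \<Rightarrow> ('w \<Rightarrow> 'a \<Rightarrow> 'a) \<Rightarrow> 'w
     \<Rightarrow> ('a \<Rightarrow> 'a set) \<Rightarrow> ('a \<Rightarrow> 'a set) \<Rightarrow> bool" where
  "dominated_splitting M fam finv \<omega>f Ecu Ecs \<longleftrightarrow>
     (\<forall>x\<in>M. direct_sum (tspace M x) (Ecu x) (Ecs x) \<and> Ecu x \<noteq> {0} \<and> Ecs x \<noteq> {0} \<and>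
        frechet_derivative (fam \<omega>f) (at x) ` Ecu x = Ecu (fam \<omega>f x) \<and>
        frechet_derivative (fam \<omega>f) (at x) ` Ecs x = Ecs (fam \<omega>f x)) \<and>
     (\<exists>C>0. \<exists>r. 0 < r \<and> r < 1 \<and> (\<forall>x\<in>M. \<forall>n::nat.
        rnorm (Dfiter fam finv (\<lambda>_. \<omega>f) (int n) x) (Ecs x) *
        rnorm (Dfiter fam finv (\<lambda>_. \<omega>f) (- int n) (fiter fam finv (\<lambda>_. \<omega>f) (int n) x))
              (Ecu (fiter fam finv (\<lambda>_. \<omega>f) (int n) x))
        \<le> C * r ^ n))"

text \<open>Regular random perturbation of f = f_{\<omega>_f}; the parameter space \<T> is the whole type 'w.\<close>
definition regular_random_perturbation :: "'a::euclidean_space set \<Rightarrow> 'd::euclidean_space itself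
     \<Rightarrow> ('w::metric_space \<Rightarrow> 'a \<Rightarrow> 'a) \<Rightarrow> ('w \<Rightarrow> 'a \<Rightarrow> 'a) \<Rightarrow> 'w \<Rightarrow> (real \<Rightarrow> 'w measure) \<Rightarrow> bool" where
  "regular_random_perturbation M TYPE('d) fam finv \<omega>f \<theta> \<longleftrightarrow>
     diff2_family M fam finv \<and>
     (\<forall>\<epsilon>>0. prob_space (\<theta> \<epsilon>) \<and> sets (\<theta> \<epsilon>) = sets borel \<and> compact (msupp (\<theta> \<epsilon>))) \<and>
     (\<forall>\<epsilon> \<epsilon>'. 0 < \<epsilon> \<and> \<epsilon> \<le> \<epsilon>' \<longrightarrow> msupp (\<theta> \<epsilon>) \<subseteq> msupp (\<theta> \<epsilon>')) \<and>
     (\<Inter>\<epsilon>\<in>{0<..}. msupp (\<theta> \<epsilon>)) = {\<omega>f} \<and>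
     (\<forall>\<epsilon>>0. \<forall>x\<in>M. \<forall>A\<in>sets borel. A \<subseteq> M \<longrightarrow> M_null M TYPE('d) A \<longrightarrow>
        emeasure (\<theta> \<epsilon>) {\<omega>. fam \<omega> x \<in> A} = 0)"

definition random_splitting :: "'a::euclidean_space set \<Rightarrow> ('w::topological_space \<Rightarrow> 'a \<Rightarrow> 'a) \<Rightarrow> (int \<Rightarrow> 'w) set
     \<Rightarrow> ((int \<Rightarrow> 'w) \<Rightarrow> 'a \<Rightarrow> 'a set) \<Rightarrow> ((int \<Rightarrow> 'w) \<Rightarrow> 'a \<Rightarrow> 'a set) \<Rightarrow> bool" where
  "random_splitting M fam \<Omega> Ecu Ecs \<longleftrightarrow>
     (\<forall>\<omega>\<in>\<Omega>. \<forall>x\<in>M. direct_sum (tspace M x) (Ecu \<omega> x) (Ecs \<omega> x) \<and>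
        frechet_derivative (fam (\<omega> 0)) (at x) ` Ecu \<omega> x = Ecu (shift \<omega>) (fam (\<omega> 0) x) \<and>
        frechet_derivative (fam (\<omega> 0)) (at x) ` Ecs \<omega> x = Ecs (shift \<omega>) (fam (\<omega> 0) x)) \<and>
     (\<forall>v. continuous_on (\<Omega> \<times> M) (\<lambda>(\<omega>, x). oproj (Ecu \<omega> x) v) \<and>
          continuous_on (\<Omega> \<times> M) (\<lambda>(\<omega>, x). oproj (Ecs \<omega> x) v))"

definition Kset :: "'a::euclidean_space set \<Rightarrow> ('w \<Rightarrow> 'a \<Rightarrow> 'a) \<Rightarrow> ('w \<Rightarrow> 'a \<Rightarrow> 'a) \<Rightarrow> (int \<Rightarrow> 'w) set
     \<Rightarrow> ((int \<Rightarrow> 'w) \<Rightarrow> 'a \<Rightarrow> 'a set) \<Rightarrow> ((int \<Rightarrow> 'w) \<Rightarrow> 'a \<Rightarrow> 'a set) \<Rightarrow> nat \<Rightarrow> real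
     \<Rightarrow> ((int \<Rightarrow> 'w) \<times> 'a) set" where
  "Kset M fam finv \<Omega> Ecu Ecs l \<beta> = {(\<omega>, x). \<omega> \<in> \<Omega> \<and> x \<in> M \<and>
     rnorm (Dfiter fam finv \<omega> (int l) x) (Ecs \<omega> x) \<le> exp (- \<beta> * real l) \<and>
     rnorm (Dfiter fam finv \<omega> (- int l) x) (Ecu \<omega> x) \<le> exp (- \<beta> * real l)}"

end

theory Submission
  imports Defs
begin

text \<open>K_l(\<beta>) is the sublevel set {h_l \<le> e^{-\<beta> l}} of h_l = max of the two restricted norms,
  and h_l is continuous on \<Omega> \<times> M because f_\<omega> depends C^1-continuously on \<omega> and the
  splitting is continuous. The exponent hypothesis puts \<mu>-a.e. point into the open set
  {h_l < e^{-\<beta> l}} for all large l, so the \<mu>-measure of these open sets tends to 1, and the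
  portmanteau inequality for open sets transfers this to the liminf of the \<mu>_n.\<close>

lemma oproj_unique:
  fixes E :: "'a::euclidean_space set"
  assumes E: "subspace E" and w: "w \<in> E" "\<forall>u\<in>E. (v - w) \<bullet> u = 0"
  shows "oproj E v = w"
proof -
  have uniq: "w1 = w2"
    if "w1 \<in> E" "\<forall>u\<in>E. (v - w1) \<bullet> u = 0" "w2 \<in> E" "\<forall>u\<in>E. (v - w2) \<bullet> u = 0" for w1 w2
  proof -
    have d: "w2 - w1 \<in> E" using that E by (simp add: subspace_diff)
    have "(v - w1) \<bullet> (w2 - w1) = 0" "(v - w2) \<bullet> (w2 - w1) = 0" using that d by auto
    then have "(w2 - w1) \<bullet> (w2 - w1) = 0" by (simp add: inner_diff_left)
    then show ?thesis by simp
  qed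
  show ?thesis unfolding oproj_def
    by (rule the_equality) (use w uniq in auto)
qed

lemma oproj_in_orthogonal:
  fixes E :: "'a::euclidean_space set"
  assumes E: "subspace E"
  shows "oproj E v \<in> E \<and> (\<forall>u\<in>E. (v - oproj E v) \<bullet> u = 0)"
proof -
  obtain y z where y: "y \<in> span E" and z: "\<And>w. w \<in> span E \<Longrightarrow> orthogonal z w" and v: "v = y + z"
    using orthogonal_subspace_decomp_exists by blast
  have sp: "span E = E" using E by (simp add: span_eq_iff)
  have "y \<in> E" "\<forall>u\<in>E. (v - y) \<bullet> u = 0" using y z v sp by (auto simp: orthogonal_def)
  then show ?thesis using oproj_unique[OF E] by metis
qed

lemma oproj_in: "subspace E \<Longrightarrow> oproj E v \<in> E"
  using oproj_in_orthogonal by blast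

lemma oproj_orthogonal: "subspace E \<Longrightarrow> u \<in> E \<Longrightarrow> (v - oproj E v) \<bullet> u = 0"
  using oproj_in_orthogonal by blast

lemma oproj_id: "subspace (E::'a::euclidean_space set) \<Longrightarrow> v \<in> E \<Longrightarrow> oproj E v = v"
  by (rule oproj_unique) auto

lemma inner_oproj: "subspace E \<Longrightarrow> u \<in> E \<Longrightarrow> oproj E v \<bullet> u = v \<bullet> u"
  using oproj_orthogonal[of E u v] by (simp add: inner_diff_left)

lemma linear_oproj:
  fixes E :: "'a::euclidean_space set"
  assumes E: "subspace E"
  shows "linear (oproj E)"
  by (rule linearI; intro oproj_unique)
    (use E in \<open>auto simp: subspace_add subspace_scale oproj_in inner_diff_left inner_add_left inner_oproj\<close>)

lemma norm_oproj_le: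
  fixes E :: "'a::euclidean_space set"
  assumes E: "subspace E"
  shows "norm (oproj E v) \<le> norm v"
proof -
  let ?p = "oproj E v"
  have "(v - ?p) \<bullet> ?p = 0" using oproj_orthogonal[OF E oproj_in[OF E]] .
  then have "(norm v)\<^sup>2 = (norm ?p)\<^sup>2 + (norm (v - ?p))\<^sup>2"
    by (metis add_diff_cancel_left' diff_add_cancel inner_commute norm_add_Pythagorean orthogonal_def)
  then have "(norm ?p)\<^sup>2 \<le> (norm v)\<^sup>2" by simp
  then show ?thesis by (simp add: power_mono_iff)
qed

lemma
  fixes L :: "'a::real_normed_vector \<Rightarrow> 'b::real_normed_vector"
  assumes L: "bounded_linear L" and E: "subspace E"
  shows rnorm_nonneg: "0 \<le> rnorm L E"
    and norm_le_rnorm: "v \<in> E \<Longrightarrow> norm (L v) \<le> rnorm L E * norm v"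
proof -
  let ?A = "(\<lambda>v. norm (L v)) ` {v \<in> E. norm v = 1}"
  have bdd: "bdd_above ?A"
    by (rule bdd_aboveI[of _ "onorm L"]) (use onorm[OF L] in \<open>auto, metis mult.right_neutral\<close>)
  have unit: "norm (L u) \<le> rnorm L E" if "u \<in> E" "norm u = 1" for u
  proof -
    have "\<not> E \<subseteq> {0}" using that by auto
    then show ?thesis using that bdd by (auto simp: rnorm_def intro!: cSup_upper)
  qed
  show nonneg: "0 \<le> rnorm L E"
  proof (cases "E \<subseteq> {0}")
    case False
    then obtain e where "e \<in> E" "e \<noteq> 0" by blast
    then have "e /\<^sub>R norm e \<in> E" "norm (e /\<^sub>R norm e) = 1" using E by (auto simp: subspace_scale)
    then show ?thesis using unit norm_ge_zero order_trans by blast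
  qed (simp add: rnorm_def)
  show "norm (L v) \<le> rnorm L E * norm v" if v: "v \<in> E"
  proof (cases "v = 0")
    case False
    have "norm (L (v /\<^sub>R norm v)) \<le> rnorm L E"
      using False v E by (intro unit) (auto simp: subspace_scale)
    moreover have "L v = norm v *\<^sub>R L (v /\<^sub>R norm v)" using L False by (simp add: linear_simps)
    ultimately show ?thesis by (simp add: mult.commute mult_left_mono)
  qed (use L nonneg in \<open>simp add: linear_simps\<close>)
qed

text \<open>Through this identity, continuity of the projections onto E gives continuity of rnorm.\<close>
lemma rnorm_eq_onorm_oproj:
  fixes L :: "'a::euclidean_space \<Rightarrow> 'b::real_normed_vector"
  assumes L: "bounded_linear L" and E: "subspace E"
  shows "rnorm L E = onorm (\<lambda>v. L (oproj E v))"
proof (rule antisym)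
  have LP: "bounded_linear (\<lambda>v. L (oproj E v))"
    using bounded_linear_compose[OF L] linear_oproj[OF E] by (simp add: linear_conv_bounded_linear)
  show "onorm (\<lambda>v. L (oproj E v)) \<le> rnorm L E"
  proof (rule onorm_le)
    fix x
    have "norm (L (oproj E x)) \<le> rnorm L E * norm (oproj E x)"
      by (rule norm_le_rnorm[OF L E oproj_in[OF E]])
    also have "\<dots> \<le> rnorm L E * norm x"
      by (rule mult_left_mono[OF norm_oproj_le[OF E] rnorm_nonneg[OF L E]])
    finally show "norm (L (oproj E x)) \<le> rnorm L E * norm x" .
  qed
  show "rnorm L E \<le> onorm (\<lambda>v. L (oproj E v))"
  proof (cases "E \<subseteq> {0}")
    case True
    then show ?thesis using onorm_pos_le[OF LP] by (simp add: rnorm_def)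
  next
    case False
    then obtain e where "e \<in> E" "e \<noteq> 0" by blast
    then have "e /\<^sub>R norm e \<in> {v \<in> E. norm v = 1}" using E by (simp add: subspace_scale)
    then have "{v \<in> E. norm v = 1} \<noteq> {}" by blast
    then show ?thesis
      using onorm[OF LP] oproj_id[OF E] False
      by (auto simp: rnorm_def intro!: cSup_least) (metis mult.right_neutral)
  qed
qed

lemma continuous_on_rnorm:
  fixes D :: "'p::t2_space \<Rightarrow> ('a::euclidean_space \<Rightarrow>\<^sub>L 'a)"
  assumes D: "continuous_on S D" and E: "\<And>p. p \<in> S \<Longrightarrow> subspace (E p)"
    and P: "\<And>v. continuous_on S (\<lambda>p. oproj (E p) v)"
  shows "continuous_on S (\<lambda>p. rnorm (blinfun_apply (D p)) (E p))"
proof -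
  define B where "B p = Blinfun (\<lambda>v. D p (oproj (E p) v))" for p
  have B_apply: "blinfun_apply (B p) = (\<lambda>v. D p (oproj (E p) v))" if "p \<in> S" for p
    unfolding B_def using linear_oproj[OF E[OF that]]
    by (intro bounded_linear_Blinfun_apply bounded_linear_compose[OF blinfun.bounded_linear_right])
      (simp add: linear_conv_bounded_linear)
  have "continuous_on S B"
  proof (rule continuous_on_blinfun_componentwise)
    fix i :: 'a
    have "continuous_on S (\<lambda>p. blinfun_apply (D p) (oproj (E p) i))"
      by (intro continuous_intros D P)
    then show "continuous_on S (\<lambda>p. blinfun_apply (B p) i)"
      by (rule continuous_on_eq) (auto simp: B_apply)
  qed
  then have "continuous_on S (\<lambda>p. norm (B p))" by (intro continuous_intros)
  then show ?thesis
    by (rule continuous_on_eq)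
      (simp add: norm_blinfun.rep_eq B_apply rnorm_eq_onorm_oproj[OF blinfun.bounded_linear_right E])
qed

text \<open>Both fpos and fneg are compositions g (\<omega> (idx (n-1))) \<circ> \<dots> \<circ> g (\<omega> (idx 0)), with
  idx k = k resp. idx k = -k-1; Drcomp is the chain-rule derivative of such a composition.\<close>
primrec rcomp :: "('w \<Rightarrow> 'a \<Rightarrow> 'a) \<Rightarrow> (nat \<Rightarrow> int) \<Rightarrow> (int \<Rightarrow> 'w) \<Rightarrow> nat \<Rightarrow> 'a \<Rightarrow> 'a" where
  "rcomp g idx \<omega> 0 = id"
| "rcomp g idx \<omega> (Suc n) = g (\<omega> (idx n)) \<circ> rcomp g idx \<omega> n"

primrec Drcomp :: "('w \<Rightarrow> 'a \<Rightarrow> ('a::real_normed_vector \<Rightarrow>\<^sub>L 'a)) \<Rightarrow> ('w \<Rightarrow> 'a \<Rightarrow> 'a) \<Rightarrow> (nat \<Rightarrow> int)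
    \<Rightarrow> (int \<Rightarrow> 'w) \<Rightarrow> nat \<Rightarrow> 'a \<Rightarrow> ('a \<Rightarrow>\<^sub>L 'a)" where
  "Drcomp Dg g idx \<omega> 0 x = id_blinfun"
| "Drcomp Dg g idx \<omega> (Suc n) x = Dg (\<omega> (idx n)) (rcomp g idx \<omega> n x) o\<^sub>L Drcomp Dg g idx \<omega> n x"

lemma fiter_int_eq_rcomp: "fiter fam finv \<omega> (int n) = rcomp fam int \<omega> n"
proof -
  have "fpos fam \<omega> n = rcomp fam int \<omega> n" by (induction n) auto
  then show ?thesis by (simp add: fiter_def)
qed

lemma fiter_minus_int_eq_rcomp: "fiter fam finv \<omega> (- int n) = rcomp finv (\<lambda>k. - int k - 1) \<omega> n"
proof -
  have "fneg finv \<omega> n = rcomp finv (\<lambda>k. - int k - 1) \<omega> n" by (induction n) auto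
  then show ?thesis by (cases "n = 0") (simp_all add: fiter_def)
qed

lemma rcomp_in:
  assumes "\<And>w y. y \<in> M \<Longrightarrow> g w y \<in> M" "x \<in> M"
  shows "rcomp g idx \<omega> n x \<in> M"
  using assms by (induction n) auto

lemma has_derivative_rcomp:
  fixes g :: "'w \<Rightarrow> 'a::real_normed_vector \<Rightarrow> 'a"
  assumes inv: "\<And>w y. y \<in> M \<Longrightarrow> g w y \<in> M" and MU: "M \<subseteq> U"
    and Dg: "\<And>\<omega> x. x \<in> U \<Longrightarrow> (g \<omega> has_derivative blinfun_apply (Dg \<omega> x)) (at x)"
    and x: "x \<in> M"
  shows "(rcomp g idx \<omega> n has_derivative blinfun_apply (Drcomp Dg g idx \<omega> n x)) (at x)"
proof (induction n)
  case 0
  then show ?case by (simp add: id_def)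
next
  case (Suc n)
  have "rcomp g idx \<omega> n x \<in> U" using rcomp_in[of M g, OF inv x] MU by blast
  from diff_chain_at[OF Suc Dg[OF this]]
  show ?case by (simp add: comp_def blinfun_apply_blinfun_compose[abs_def])
qed

lemma continuous_on_rcomp:
  fixes g :: "'w::topological_space \<Rightarrow> 'a::real_normed_vector \<Rightarrow> 'a"
    and h :: "'w \<Rightarrow> 'a \<Rightarrow> 'b::topological_space"
  assumes inv: "\<And>w y. y \<in> M \<Longrightarrow> g w y \<in> M" and MU: "M \<subseteq> U"
    and g: "continuous_on (UNIV \<times> U) (\<lambda>(\<omega>, x). g \<omega> x)"
    and h: "continuous_on (UNIV \<times> U) (\<lambda>(\<omega>, x). h \<omega> x)"
  shows "continuous_on (UNIV \<times> M) (\<lambda>p. rcomp g idx (fst p) n (snd p))"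
    and "continuous_on (UNIV \<times> M) (\<lambda>p. h (fst p (idx n)) (rcomp g idx (fst p) n (snd p)))"
proof -
  have coord: "continuous_on (UNIV \<times> M) (\<lambda>p. fst p k)" for k
    by (rule continuous_on_compose2[OF continuous_on_product_coordinates continuous_on_fst]) auto
  have step: "continuous_on (UNIV \<times> M) (\<lambda>p. h (fst p (idx n)) (r p))"
    if r: "continuous_on (UNIV \<times> M) r" "\<And>p. p \<in> UNIV \<times> M \<Longrightarrow> r p \<in> M"
    and h: "continuous_on (UNIV \<times> U) (\<lambda>(\<omega>, x). h \<omega> x)"
    for h :: "'w \<Rightarrow> 'a \<Rightarrow> 'c::topological_space" and r n
    using continuous_on_compose[OF continuous_on_Pair[OF coord r(1)] continuous_on_subset[OF h]] r(2) MU
    by (auto simp: comp_def)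
  show rc: "continuous_on (UNIV \<times> M) (\<lambda>p. rcomp g idx (fst p) n (snd p))" for n
    by (induction n) (auto simp: continuous_on_snd rcomp_in[of M g, OF inv] intro: step[OF _ _ g])
  show "continuous_on (UNIV \<times> M) (\<lambda>p. h (fst p (idx n)) (rcomp g idx (fst p) n (snd p)))"
    by (rule step[OF rc _ h]) (auto simp: rcomp_in[of M g, OF inv])
qed

lemma continuous_on_Drcomp:
  fixes g :: "'w::topological_space \<Rightarrow> 'a::real_normed_vector \<Rightarrow> 'a"
  assumes inv: "\<And>w y. y \<in> M \<Longrightarrow> g w y \<in> M" and MU: "M \<subseteq> U"
    and g: "continuous_on (UNIV \<times> U) (\<lambda>(\<omega>, x). g \<omega> x)"
    and Dg: "continuous_on (UNIV \<times> U) (\<lambda>(\<omega>, x). Dg \<omega> x)"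
  shows "continuous_on (UNIV \<times> M) (\<lambda>p. Drcomp Dg g idx (fst p) n (snd p))"
  by (induction n) (auto intro!: continuous_intros continuous_on_rcomp(2)[OF inv MU g Dg])

lemma continuous_on_rnorm_derivative_rcomp:
  fixes g :: "'w::metric_space \<Rightarrow> 'a::euclidean_space \<Rightarrow> 'a"
  assumes g: "C2_family U g" and MU: "M \<subseteq> U" and inv: "\<And>w y. y \<in> M \<Longrightarrow> g w y \<in> M"
    and SM: "S \<subseteq> UNIV \<times> M" and E: "\<And>p. p \<in> S \<Longrightarrow> subspace (E p)"
    and P: "\<And>v. continuous_on S (\<lambda>p. oproj (E p) v)"
  shows "continuous_on S (\<lambda>p. rnorm (frechet_derivative (rcomp g idx (fst p) n) (at (snd p))) (E p))"
proof -
  obtain Dg D2g where Dg: "\<And>\<omega> x. x \<in> U \<Longrightarrow> (g \<omega> has_derivative blinfun_apply (Dg \<omega> x)) (at x)"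
    and cont: "continuous_on (UNIV \<times> U) (\<lambda>(\<omega>, x). g \<omega> x)" "continuous_on (UNIV \<times> U) (\<lambda>(\<omega>, x). Dg \<omega> x)"
    using g unfolding C2_family_def by blast
  have D: "continuous_on (UNIV \<times> M) (\<lambda>p. Drcomp Dg g idx (fst p) n (snd p))"
    using continuous_on_Drcomp[of M g, OF inv MU cont] .
  have "continuous_on S (\<lambda>p. rnorm (blinfun_apply (Drcomp Dg g idx (fst p) n (snd p))) (E p))"
    by (rule continuous_on_rnorm[OF continuous_on_subset[OF D SM] E P])
  moreover have "blinfun_apply (Drcomp Dg g idx (fst p) n (snd p))
      = frechet_derivative (rcomp g idx (fst p) n) (at (snd p))" if "p \<in> S" for p
    using frechet_derivative_at[OF has_derivative_rcomp[of M g, OF inv MU Dg]] that SM by auto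
  ultimately show ?thesis by (auto intro: continuous_on_eq)
qed

lemma
  fixes fam finv :: "'w::metric_space \<Rightarrow> 'a::euclidean_space \<Rightarrow> 'a"
  assumes fam: "diff2_family M fam finv" and splitting: "random_splitting M fam \<Omega> Ecu Ecs"
  shows continuous_on_rnorm_Dfiter_Ecs:
      "continuous_on (\<Omega> \<times> M) (\<lambda>p. rnorm (Dfiter fam finv (fst p) (int l) (snd p)) (Ecs (fst p) (snd p)))"
    and continuous_on_rnorm_Dfiter_Ecu:
      "continuous_on (\<Omega> \<times> M) (\<lambda>p. rnorm (Dfiter fam finv (fst p) (- int l) (snd p)) (Ecu (fst p) (snd p)))"
proof -
  obtain U where U: "M \<subseteq> U" "C2_family U fam" "C2_family U finv"
    and inv: "\<And>\<omega> x. x \<in> M \<Longrightarrow> fam \<omega> x \<in> M" "\<And>\<omega> x. x \<in> M \<Longrightarrow> finv \<omega> x \<in> M"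
    using fam unfolding diff2_family_def by blast
  have sub: "subspace (Ecs (fst p) (snd p))" "subspace (Ecu (fst p) (snd p))" if "p \<in> \<Omega> \<times> M" for p
    using splitting that unfolding random_splitting_def direct_sum_def by (auto simp: mem_Times_iff)
  have proj: "continuous_on (\<Omega> \<times> M) (\<lambda>p. oproj (Ecs (fst p) (snd p)) v)"
    "continuous_on (\<Omega> \<times> M) (\<lambda>p. oproj (Ecu (fst p) (snd p)) v)" for v
    using splitting unfolding random_splitting_def by (auto simp: case_prod_unfold)
  show "continuous_on (\<Omega> \<times> M) (\<lambda>p. rnorm (Dfiter fam finv (fst p) (int l) (snd p)) (Ecs (fst p) (snd p)))"
    using continuous_on_rnorm_derivative_rcomp[OF U(2,1) inv(1) _ sub(1) proj(1)]
    by (auto simp: Dfiter_def fiter_int_eq_rcomp)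
  show "continuous_on (\<Omega> \<times> M) (\<lambda>p. rnorm (Dfiter fam finv (fst p) (- int l) (snd p)) (Ecu (fst p) (snd p)))"
    using continuous_on_rnorm_derivative_rcomp[OF U(3,1) inv(2) _ sub(2) proj(2)]
    by (auto simp: Dfiter_def fiter_minus_int_eq_rcomp)
qed

lemma prob_onD:
  assumes "prob_on S N"
  shows "finite_measure N" "S \<in> sets N" "measure N S = 1" "sets N = sets borel"
    and "A \<in> sets borel \<Longrightarrow> S \<inter> A \<in> sets N"
proof -
  have ps: "prob_space N" and sb: "sets N = sets borel" and e: "emeasure N S = 1"
    using assms by (auto simp: prob_on_def)
  show "finite_measure N" using ps by (simp add: prob_space_def)
  show S: "S \<in> sets N" using e emeasure_notin_sets by fastforce
  show "measure N S = 1" using e by (simp add: measure_def)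
  show "sets N = sets borel" by fact
  show "A \<in> sets borel \<Longrightarrow> S \<inter> A \<in> sets N" using S sb by auto
qed

lemma sublevel_set_in_sets:
  assumes N: "prob_on S N" and h: "continuous_on S (h :: _ \<Rightarrow> real)"
  shows "{p \<in> S. h p \<le> c} \<in> sets N"
proof -
  obtain C where "closed C" "C \<inter> S = h -` {..c} \<inter> S"
    using h[unfolded continuous_on_closed_invariant] closed_atMost by blast
  moreover have "C \<in> sets borel" using \<open>closed C\<close> by simp
  ultimately have "S \<inter> C \<in> sets N" using prob_onD(5)[OF N] by blast
  moreover have "S \<inter> C = {p \<in> S. h p \<le> c}" using \<open>C \<inter> S = _\<close> by auto
  ultimately show ?thesis by simp
qed

lemma strict_sublevel_set_eq_Int_open:
  assumes "continuous_on S (h :: _ \<Rightarrow> real)"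
  shows "\<exists>W. open W \<and> S \<inter> W = {p \<in> S. h p < c}"
proof -
  obtain W where "open W" "W \<inter> S = h -` {..<c} \<inter> S"
    using assms[unfolded continuous_on_open_invariant] open_lessThan by blast
  moreover have "S \<inter> W = {p \<in> S. h p < c}" using \<open>W \<inter> S = _\<close> by auto
  ultimately show ?thesis by blast
qed

lemma tendsto_min_infdist_indicator:
  assumes "closed F" "F \<noteq> {}"
  shows "(\<lambda>k. min 1 (real k * infdist p F)) \<longlonglongrightarrow> indicator (- F) p"
proof (cases "p \<in> F")
  case False
  then have pos: "0 < infdist p F" using assms infdist_pos_not_in_closed by blast
  obtain K :: nat where K: "1 / infdist p F < real K" using reals_Archimedean2 by blast
  have "1 \<le> real k * infdist p F" if "k \<ge> K" for k
  proof -
    have "1 / infdist p F < real k" using K that by linarith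
    then show ?thesis using pos by (simp add: field_simps)
  qed
  then have "\<forall>\<^sub>F k in sequentially. min 1 (real k * infdist p F) = indicator (- F) p"
    using False unfolding eventually_sequentially by (auto intro!: exI[of _ K])
  then show ?thesis by (rule tendsto_eventually)
qed simp

lemma integrable_min_infdist:
  assumes N: "prob_on S N"
  shows "integrable N (\<lambda>p. indicator S p *\<^sub>R min 1 (real k * infdist p F))"
proof -
  have "continuous_on UNIV (\<lambda>p. min 1 (real k * infdist p F))" by (intro continuous_intros)
  then have "(\<lambda>p. min 1 (real k * infdist p F)) \<in> borel_measurable N"
    using borel_measurable_continuous_onI measurable_cong_sets[OF prob_onD(4)[OF N] refl] by blast
  then show ?thesis
    using prob_onD(2)[OF N]
    by (intro finite_measure.integrable_const_bound[OF prob_onD(1)[OF N], where B=1])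
      (auto simp: indicator_def infdist_nonneg)
qed

lemma set_integral_min_infdist_le:
  assumes N: "prob_on S N" and W: "open W"
  shows "(LINT p:S|N. min 1 (real k * infdist p (- W))) \<le> measure N (S \<inter> W)"
proof -
  have SW: "S \<inter> W \<in> sets N" using prob_onD(5)[OF N] W by simp
  have "(LINT p:S|N. min 1 (real k * infdist p (- W))) \<le> integral\<^sup>L N (indicator (S \<inter> W))"
    unfolding set_lebesgue_integral_def
    using integrable_min_infdist[OF N] SW prob_onD(1)[OF N]
    by (intro integral_mono)
      (auto simp: finite_measure.emeasure_finite less_top[symmetric] indicator_def infdist_nonneg)
  also have "\<dots> = measure N (S \<inter> W)"
    using SW by (simp add: Int_absorb2 sets.sets_into_space)
  finally show ?thesis .
qed

lemma tendsto_set_integral_min_infdist: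
  assumes \<mu>: "prob_on S \<mu>" and W: "open W" "W \<noteq> UNIV"
  shows "(\<lambda>k. LINT p:S|\<mu>. min 1 (real k * infdist p (- W))) \<longlonglongrightarrow> measure \<mu> (S \<inter> W)"
proof -
  have SW: "S \<inter> W \<in> sets \<mu>" using prob_onD(5)[OF \<mu>] W by simp
  have "(\<lambda>k. integral\<^sup>L \<mu> (\<lambda>p. indicator S p *\<^sub>R min 1 (real k * infdist p (- W))))
      \<longlonglongrightarrow> integral\<^sup>L \<mu> (indicator (S \<inter> W))"
  proof (rule integral_dominated_convergence[where w="\<lambda>_. 1"])
    show "indicat_real (S \<inter> W) \<in> borel_measurable \<mu>" using SW by simp
    show "(\<lambda>p. indicator S p *\<^sub>R min 1 (real k * infdist p (- W))) \<in> borel_measurable \<mu>" for k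
      using integrable_min_infdist[OF \<mu>] by blast
    show "integrable \<mu> (\<lambda>_. 1::real)"
      using prob_onD(1)[OF \<mu>] by (simp add: finite_measure.integrable_const)
    show "AE p in \<mu>. norm (indicator S p *\<^sub>R min 1 (real k * infdist p (- W))) \<le> 1" for k
      by (auto simp: indicator_def infdist_nonneg)
    show "AE p in \<mu>. (\<lambda>k. indicator S p *\<^sub>R min 1 (real k * infdist p (- W))) \<longlonglongrightarrow> indicator (S \<inter> W) p"
    proof (intro AE_I2)
      fix p
      have "closed (- W)" "- W \<noteq> {}" using W by auto
      from tendsto_min_infdist_indicator[OF this, of p]
      show "(\<lambda>k. indicator S p *\<^sub>R min 1 (real k * infdist p (- W))) \<longlonglongrightarrow> indicator (S \<inter> W) p"
        by (cases "p \<in> S") (auto simp: indicator_def)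
    qed
  qed
  then show ?thesis
    using SW unfolding set_lebesgue_integral_def by (simp add: Int_absorb2 sets.sets_into_space)
qed

lemma portmanteau_open:
  fixes \<mu>s :: "nat \<Rightarrow> 'b::metric_space measure"
  assumes \<mu>s: "\<And>n. prob_on S (\<mu>s n)" and \<mu>: "prob_on S \<mu>"
    and conv: "weak_star_conv S \<mu>s \<mu>" and W: "open W" and c: "c < measure \<mu> (S \<inter> W)"
  shows "ereal c < liminf (\<lambda>n. ereal (measure (\<mu>s n) (S \<inter> W)))"
proof (cases "W = UNIV")
  case True
  then show ?thesis using c prob_onD(3)[OF \<mu>s] prob_onD(3)[OF \<mu>] by (simp add: Liminf_const)
next
  case False
  define I where "I N k = (LINT p:S|N. min 1 (real k * infdist p (- W)))" for N k
  obtain k where k: "c < I \<mu> k"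
    using order_tendstoD(1)[OF tendsto_set_integral_min_infdist[OF \<mu> W False] c]
    by (auto simp: I_def eventually_sequentially)
  have "continuous_on S (\<lambda>p. min 1 (real k * infdist p (- W)))" by (intro continuous_intros)
  then have "(\<lambda>n. I (\<mu>s n) k) \<longlonglongrightarrow> I \<mu> k"
    using conv unfolding weak_star_conv_def I_def by blast
  then have "liminf (\<lambda>n. ereal (I (\<mu>s n) k)) = ereal (I \<mu> k)"
    by (intro lim_imp_Liminf) auto
  also have "\<dots> > ereal c" using k by simp
  finally show ?thesis
    using Liminf_mono[of "\<lambda>n. ereal (I (\<mu>s n) k)" "\<lambda>n. ereal (measure (\<mu>s n) (S \<inter> W))"]
      set_integral_min_infdist_le[OF \<mu>s W] by (auto simp: I_def intro: less_le_trans)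
qed

lemma eventually_measure_Int_open_gt:
  assumes \<mu>: "prob_on S \<mu>" and W: "\<And>l. open (W l)"
    and ev: "AE p in \<mu>. p \<in> S \<longrightarrow> (\<forall>\<^sub>F l in sequentially. p \<in> W l)" and c: "c < 1"
  shows "\<exists>L. \<forall>l\<ge>L. c < measure \<mu> (S \<inter> W l)"
proof -
  define B where "B L = S \<inter> (\<Inter>l\<in>{L..}. W l)" for L
  have B_sets: "B L \<in> sets \<mu>" for L
    using W unfolding B_def by (intro prob_onD(5)[OF \<mu>] sets.countable_INT') auto
  have "incseq B" unfolding incseq_def B_def by auto
  have "AE p in \<mu>. p \<in> S"
    using \<mu> prob_onD(2,3)[OF \<mu>] unfolding prob_on_def by (auto intro: prob_space.AE_prob_1)
  with ev have "AE p in \<mu>. p \<in> (\<Union>L. B L) \<longleftrightarrow> p \<in> S"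
    by eventually_elim (auto simp: B_def eventually_sequentially)
  moreover have "(\<Union>L. B L) \<in> sets \<mu>" using B_sets by blast
  ultimately have "measure \<mu> (\<Union>L. B L) = 1"
    using measure_eq_AE prob_onD(2,3)[OF \<mu>] by metis
  then have "(\<lambda>L. measure \<mu> (B L)) \<longlonglongrightarrow> 1"
    using finite_measure.finite_Lim_measure_incseq[OF prob_onD(1)[OF \<mu>] _ \<open>incseq B\<close>] B_sets
    by auto
  then obtain L where L: "c < measure \<mu> (B L)"
    using order_tendstoD(1)[OF _ c] eventually_sequentially by (metis order.refl)
  have "measure \<mu> (B L) \<le> measure \<mu> (S \<inter> W l)" if "l \<ge> L" for l
    using that W B_sets prob_onD(5)[OF \<mu>]
    by (intro finite_measure.finite_measure_mono[OF prob_onD(1)[OF \<mu>]]) (auto simp: B_def)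
  then show ?thesis using L by (meson less_le_trans)
qed

lemma liminf_measure_sublevel_sets_gt:
  fixes \<mu>s :: "nat \<Rightarrow> 'b::metric_space measure" and h :: "nat \<Rightarrow> 'b \<Rightarrow> real"
  assumes \<mu>s: "\<And>n. prob_on S (\<mu>s n)" and \<mu>: "prob_on S \<mu>" and conv: "weak_star_conv S \<mu>s \<mu>"
    and h: "\<And>l. continuous_on S (h l)"
    and ev: "AE p in \<mu>. p \<in> S \<longrightarrow> (\<forall>\<^sub>F l in sequentially. h l p < c l)" and t: "t < 1"
  shows "\<exists>l0. \<forall>l\<ge>l0. ereal t < liminf (\<lambda>n. ereal (measure (\<mu>s n) {p \<in> S. h l p \<le> c l}))"
proof -
  have "\<forall>l. \<exists>W. open W \<and> S \<inter> W = {p \<in> S. h l p < c l}"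
    using strict_sublevel_set_eq_Int_open[OF h] by blast
  then obtain W where W: "\<And>l. open (W l)" "\<And>l. S \<inter> W l = {p \<in> S. h l p < c l}"
    by (metis choice)
  have "AE p in \<mu>. p \<in> S \<longrightarrow> (\<forall>\<^sub>F l in sequentially. p \<in> W l)"
  proof (rule eventually_mono[OF ev], intro impI)
    fix p assume "p \<in> S \<longrightarrow> (\<forall>\<^sub>F l in sequentially. h l p < c l)" and p: "p \<in> S"
    then show "\<forall>\<^sub>F l in sequentially. p \<in> W l"
      using W(2) by (auto elim!: eventually_mono)
  qed
  from eventually_measure_Int_open_gt[OF \<mu> W(1) this t]
  obtain L where L: "\<And>l. l \<ge> L \<Longrightarrow> t < measure \<mu> (S \<inter> W l)" by blast
  have "ereal t < liminf (\<lambda>n. ereal (measure (\<mu>s n) {p \<in> S. h l p \<le> c l}))" if "l \<ge> L" for l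
  proof -
    have "ereal t < liminf (\<lambda>n. ereal (measure (\<mu>s n) (S \<inter> W l)))"
      by (rule portmanteau_open[OF \<mu>s \<mu> conv W(1) L[OF that]])
    also have "\<dots> \<le> liminf (\<lambda>n. ereal (measure (\<mu>s n) {p \<in> S. h l p \<le> c l}))"
    proof (intro Liminf_mono always_eventually allI)
      fix n
      have "S \<inter> W l \<subseteq> {p \<in> S. h l p \<le> c l}" using W(2) by auto
      then show "ereal (measure (\<mu>s n) (S \<inter> W l)) \<le> ereal (measure (\<mu>s n) {p \<in> S. h l p \<le> c l})"
        using finite_measure.finite_measure_mono[OF prob_onD(1)[OF \<mu>s] _ sublevel_set_in_sets[OF \<mu>s h]]
        by simp
    qed
    finally show ?thesis .
  qed
  then show ?thesis by blast
qed

lemma eventually_less_exp_of_growth_rate: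
  assumes lim: "(\<lambda>n. ln (x n) / real n) \<longlonglongrightarrow> L" and L: "L < - \<beta>"
  shows "\<forall>\<^sub>F n in sequentially. x n < exp (- \<beta> * real n)"
  using order_tendstoD(2)[OF lim L] eventually_gt_at_top[of 0]
proof eventually_elim
  case (elim n)
  show ?case
  proof (cases "x n \<le> 0")
    case False
    then have "ln (x n) < - \<beta> * real n" using elim by (simp add: field_simps)
    then show ?thesis using False by (metis exp_less_cancel_iff exp_ln not_le)
  qed (simp add: order_le_less_trans)
qed

theorem lemma4p1:
  fixes M :: "'a::euclidean_space set"
    and fam finv :: "'w::metric_space \<Rightarrow> 'a \<Rightarrow> 'a"
    and \<omega>f :: 'w
    and \<theta> :: "real \<Rightarrow> 'w measure"
    and Ecu0 Ecs0 :: "'a \<Rightarrow> 'a set"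
    and \<epsilon>0 :: real
    and Ecu Ecs :: "(int \<Rightarrow> 'w) \<Rightarrow> 'a \<Rightarrow> 'a set"
    and \<alpha> \<beta> :: real
    and \<mu>s :: "nat \<Rightarrow> ((int \<Rightarrow> 'w) \<times> 'a) measure"
    and \<mu> :: "((int \<Rightarrow> 'w) \<times> 'a) measure"
  assumes M_compact: "compact M" and M_ne: "M \<noteq> {}"
    and M_manifold: "C2_submanifold M TYPE('d::euclidean_space)"
    and perturbation: "regular_random_perturbation M TYPE('d) fam finv \<omega>f \<theta>"
    and dominated: "dominated_splitting M fam finv \<omega>f Ecu0 Ecs0"
    and eps0: "\<epsilon>0 > 0"
    and splitting: "random_splitting M fam (Omega \<theta> \<epsilon>0) Ecu Ecs"
    and alpha_beta: "0 < \<alpha>" "\<alpha> < \<beta>"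
    and mu_n: "\<And>n. prob_on (Omega \<theta> \<epsilon>0 \<times> M) (\<mu>s n)"
    and mu_n_inv: "\<And>n. invariant_on (Omega \<theta> \<epsilon>0 \<times> M) (skewF fam) (\<mu>s n)"
    and mu: "prob_on (Omega \<theta> \<epsilon>0 \<times> M) \<mu>"
    and conv: "weak_star_conv (Omega \<theta> \<epsilon>0 \<times> M) \<mu>s \<mu>"
    and exps: "AE p in \<mu>. p \<in> Omega \<theta> \<epsilon>0 \<times> M \<longrightarrow>
        (\<exists>L. ((\<lambda>n. ln (rnorm (Dfiter fam finv (fst p) (- int n) (snd p)) (Ecu (fst p) (snd p))) / real n)
                \<longlonglongrightarrow> L) \<and> L < - \<beta>) \<and>
        (\<exists>L. ((\<lambda>n. ln (rnorm (Dfiter fam finv (fst p) (int n) (snd p)) (Ecs (fst p) (snd p))) / real n)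
                \<longlonglongrightarrow> L) \<and> L < - \<beta>)"
  shows "\<forall>eta. 0 < eta \<and> eta < 1 \<longrightarrow> (\<exists>l0::nat. \<forall>l\<ge>l0.
           liminf (\<lambda>n. ereal (measure (\<mu>s n) (Kset M fam finv (Omega \<theta> \<epsilon>0) Ecu Ecs l \<beta>)))
             > ereal (1 - eta))"
proof (intro allI impI)
  fix eta :: real assume eta: "0 < eta \<and> eta < 1"
  define h where "h l p = max (rnorm (Dfiter fam finv (fst p) (int l) (snd p)) (Ecs (fst p) (snd p)))
    (rnorm (Dfiter fam finv (fst p) (- int l) (snd p)) (Ecu (fst p) (snd p)))" for l p
  have fam: "diff2_family M fam finv"
    using perturbation by (simp add: regular_random_perturbation_def)
  have h_cont: "continuous_on (Omega \<theta> \<epsilon>0 \<times> M) (h l)" for l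
    unfolding h_def
    by (intro continuous_on_max continuous_on_rnorm_Dfiter_Ecs[OF fam splitting]
        continuous_on_rnorm_Dfiter_Ecu[OF fam splitting])
  have "AE p in \<mu>. p \<in> Omega \<theta> \<epsilon>0 \<times> M \<longrightarrow> (\<forall>\<^sub>F l in sequentially. h l p < exp (- \<beta> * real l))"
    using exps by eventually_elim
      (auto simp: h_def dest!: eventually_less_exp_of_growth_rate intro: eventually_conj elim: eventually_mono)
  from liminf_measure_sublevel_sets_gt[OF mu_n mu conv h_cont this, of "1 - eta"]
  obtain l0 where "\<forall>l\<ge>l0. ereal (1 - eta) < liminf (\<lambda>n. ereal (measure (\<mu>s n)
      {p \<in> Omega \<theta> \<epsilon>0 \<times> M. h l p \<le> exp (- \<beta> * real l)}))"
    using eta by auto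
  moreover have "Kset M fam finv (Omega \<theta> \<epsilon>0) Ecu Ecs l \<beta>
      = {p \<in> Omega \<theta> \<epsilon>0 \<times> M. h l p \<le> exp (- \<beta> * real l)}" for l
    by (auto simp: Kset_def h_def)
  ultimately show "\<exists>l0. \<forall>l\<ge>l0. liminf (\<lambda>n. ereal (measure (\<mu>s n) (Kset M fam finv (Omega \<theta> \<epsilon>0) Ecu Ecs l \<beta>)))
      > ereal (1 - eta)"
    by auto
qed

end
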